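(* Let $\pi>0$, let $0<\theta_1<\dots<\theta_K$ and $0\le\beta_1<\dots<\beta_M\le1$, and let $A:[0,D]\to[0,\infty)$ be differentiable with $A'(Q)<0$ on $[0,D]$. For $Q\in[0,D]$ define $\sigma(Q,\beta,\theta)=-[\theta\beta+\pi(1-\beta)]A'(Q)$. Let $\Lambda_1$ denote a user type $(\beta_m,\theta_k)$ with the smallest value of $\sigma(Q,\cdot)$ and $\Lambda_{KM}$ a user type with the largest value of $\sigma(Q,\cdot)$ among the $KM$ types. Then: (i) if $\theta_1<\theta_K<\pi$, one may take $\Lambda_1=(\beta_M,\theta_1)$ and $\Lambda_{KM}=(\beta_1,\theta_K)$; (ii) if $\theta_1<\pi<\theta_K$, one may take $\Lambda_1=(\beta_M,\theta_1)$ and $\Lambda_{KM}=(\beta_M,\theta_K)$; (iii) if $\pi<\theta_1<\theta_K$, one may take $\Lambda_1=(\beta_1,\theta_1)$ and $\Lambda_{KM}=(\beta_M,\theta_K)$. (That is, in each case the stated type minimizes, resp. maximizes, $\sigma(Q,\cdot)$ over all $KM$ types, for every $Q$.)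
   Context: Model: $\pi$ is the overage price per unit of data beyond the cap; $A(Q)$ is a subscriber's expected overage consumption under data cap $Q$ (decreasing and convex). A user type $(\beta,\theta)$ consists of a data valuation $\theta$ and a network substitutability $\beta$; $\sigma$ is the user's willingness-to-pay (slope of his indifference curve in the cap/fee plane). Types are sorted as $\Lambda_1,\dots,\Lambda_{KM}$ in ascending order of $\sigma$; this ordering does not depend on $Q$. *)

theory Defs
  imports Complex_Main
begin

definition wtp :: "real \<Rightarrow> (real \<Rightarrow> real) \<Rightarrow> real \<Rightarrow> real \<Rightarrow> real \<Rightarrow> real" where
  "wtp pr A' Q b t = - (t * b + pr * (1 - b)) * A' Q"

end

theory Submission
  imports Defs
begin

text \<open>Writing \<open>\<sigma> = (\<pi> + \<beta> (\<theta> - \<pi>)) (-A'(Q))\<close> with \<open>-A'(Q) > 0\<close>, the willingness-to-pay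
  increases with \<open>\<theta>\<close>, and increases or decreases with \<open>\<beta>\<close> according as \<open>\<theta> \<ge> \<pi>\<close> or
  \<open>\<theta> \<le> \<pi>\<close>. Each extreme type is reached from an arbitrary type \<open>(\<beta>\<^sub>m, \<theta>\<^sub>k)\<close> by first
  moving \<open>\<theta>\<close> to an extreme value and then moving \<open>\<beta>\<close> in the direction dictated by the
  sign of \<open>\<theta> - \<pi>\<close>.\<close>

lemma wtp_eq: "wtp pr A' Q b t = (pr + b * (t - pr)) * (- A' Q)"
  unfolding wtp_def by (simp add: algebra_simps)

lemma wtp_mono_theta:
  assumes "A' Q < 0" "0 \<le> b" "t \<le> t'"
  shows "wtp pr A' Q b t \<le> wtp pr A' Q b t'"
  using assms unfolding wtp_eq by (intro mult_right_mono) (auto intro: mult_left_mono)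

lemma wtp_mono_beta:
  assumes "A' Q < 0" "pr \<le> t" "b \<le> b'"
  shows "wtp pr A' Q b t \<le> wtp pr A' Q b' t"
  using assms unfolding wtp_eq by (intro mult_right_mono) (auto intro: mult_right_mono)

lemma wtp_antimono_beta:
  assumes "A' Q < 0" "t \<le> pr" "b \<le> b'"
  shows "wtp pr A' Q b' t \<le> wtp pr A' Q b t"
  using assms unfolding wtp_eq by (intro mult_right_mono) (auto intro: mult_right_mono_neg)

lemma strict_mono_seg_bounds:
  fixes f :: "nat \<Rightarrow> 'a::order"
  assumes "\<And>i j. 1 \<le> i \<Longrightarrow> i < j \<Longrightarrow> j \<le> n \<Longrightarrow> f i < f j" and "k \<in> {1..n}"
  shows "f 1 \<le> f k \<and> f k \<le> f n"
  using assms(2) assms(1)[of 1 k] assms(1)[of k n]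
  by (cases "k = 1"; cases "k = n") (auto simp: order_less_imp_le)

theorem proposition2:
  fixes pr D :: real and K M :: nat
    and theta beta :: "nat \<Rightarrow> real"
    and A A' :: "real \<Rightarrow> real"
  assumes pr_pos: "pr > 0"
    and K_pos: "K \<ge> 1" and M_pos: "M \<ge> 1"
    and theta_pos: "theta 1 > 0"
    and theta_mono: "\<And>i j. 1 \<le> i \<Longrightarrow> i < j \<Longrightarrow> j \<le> K \<Longrightarrow> theta i < theta j"
    and beta_nonneg: "beta 1 \<ge> 0" and beta_le1: "beta M \<le> 1"
    and beta_mono: "\<And>i j. 1 \<le> i \<Longrightarrow> i < j \<Longrightarrow> j \<le> M \<Longrightarrow> beta i < beta j"
    and D_nonneg: "D \<ge> 0"
    and A_nonneg: "\<And>Q. Q \<in> {0..D} \<Longrightarrow> A Q \<ge> 0"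
    and A_deriv: "\<And>Q. Q \<in> {0..D} \<Longrightarrow> (A has_real_derivative A' Q) (at Q within {0..D})"
    and A'_neg: "\<And>Q. Q \<in> {0..D} \<Longrightarrow> A' Q < 0"
  shows
    "(theta 1 < theta K \<and> theta K < pr \<longrightarrow>
       (\<forall>Q\<in>{0..D}. \<forall>m\<in>{1..M}. \<forall>k\<in>{1..K}.
          wtp pr A' Q (beta M) (theta 1) \<le> wtp pr A' Q (beta m) (theta k) \<and>
          wtp pr A' Q (beta m) (theta k) \<le> wtp pr A' Q (beta 1) (theta K))) \<and>
     (theta 1 < pr \<and> pr < theta K \<longrightarrow>
       (\<forall>Q\<in>{0..D}. \<forall>m\<in>{1..M}. \<forall>k\<in>{1..K}.
          wtp pr A' Q (beta M) (theta 1) \<le> wtp pr A' Q (beta m) (theta k) \<and>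
          wtp pr A' Q (beta m) (theta k) \<le> wtp pr A' Q (beta M) (theta K))) \<and>
     (pr < theta 1 \<and> theta 1 < theta K \<longrightarrow>
       (\<forall>Q\<in>{0..D}. \<forall>m\<in>{1..M}. \<forall>k\<in>{1..K}.
          wtp pr A' Q (beta 1) (theta 1) \<le> wtp pr A' Q (beta m) (theta k) \<and>
          wtp pr A' Q (beta m) (theta k) \<le> wtp pr A' Q (beta M) (theta K)))"
proof (intro conjI impI ballI)
  fix Q m k assume Q: "Q \<in> {0..D}" and "m \<in> {1..M}" "k \<in> {1..K}"
  have A'Q: "A' Q < 0" using A'_neg[OF Q] .
  have theta_k: "theta 1 \<le> theta k" "theta k \<le> theta K"
    using strict_mono_seg_bounds[of K theta k] theta_mono \<open>k \<in> {1..K}\<close> by blast+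
  have beta_m: "beta 1 \<le> beta m" "beta m \<le> beta M"
    using strict_mono_seg_bounds[of M beta m] beta_mono \<open>m \<in> {1..M}\<close> by blast+
  have nonneg: "0 \<le> beta m" "0 \<le> beta M" using beta_nonneg beta_m by linarith+
  note steps = wtp_mono_theta[where A'=A' and Q=Q, OF A'Q]
    wtp_mono_beta[where A'=A' and Q=Q, OF A'Q] wtp_antimono_beta[where A'=A' and Q=Q, OF A'Q]
  show "wtp pr A' Q (beta M) (theta 1) \<le> wtp pr A' Q (beta m) (theta k)"
    if "theta 1 < theta K \<and> theta K < pr"
    using that steps theta_k beta_m nonneg by (meson order.trans less_imp_le)
  show "wtp pr A' Q (beta m) (theta k) \<le> wtp pr A' Q (beta 1) (theta K)"
    if "theta 1 < theta K \<and> theta K < pr"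
    using that steps theta_k beta_m nonneg by (meson order.trans less_imp_le)
  show "wtp pr A' Q (beta M) (theta 1) \<le> wtp pr A' Q (beta m) (theta k)"
    if "theta 1 < pr \<and> pr < theta K"
    using that steps theta_k beta_m nonneg by (meson order.trans less_imp_le)
  show "wtp pr A' Q (beta m) (theta k) \<le> wtp pr A' Q (beta M) (theta K)"
    if "theta 1 < pr \<and> pr < theta K"
    using that steps theta_k beta_m nonneg by (meson order.trans less_imp_le)
  show "wtp pr A' Q (beta 1) (theta 1) \<le> wtp pr A' Q (beta m) (theta k)"
    if "pr < theta 1 \<and> theta 1 < theta K"
    using that steps theta_k beta_m nonneg by (meson order.trans less_imp_le)
  show "wtp pr A' Q (beta m) (theta k) \<le> wtp pr A' Q (beta M) (theta K)"
    if "pr < theta 1 \<and> theta 1 < theta K"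
    using that steps theta_k beta_m nonneg by (meson order.trans less_imp_le)
qed

end
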